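(* Let $\lambda,\mu$ be integral partitions with $\lambda\neq\mu$, and suppose $\|\lambda\|_p=\|\mu\|_p$ for some real $p$ with $1<p<\infty$. Then $\lambda^{\times n}\not\hookrightarrow\mu^{\times n}$ for every positive integer $n$.
   Context: An integral partition is a finite nonincreasing sequence of positive integers (equality means equality as multisets of entries). For $p\in[1,\infty)$, $\|\lambda\|_p=(\sum_i\lambda_i^p)^{1/p}$. The product $\lambda\times\mu$ of $\lambda=[\lambda_1,\ldots,\lambda_m]$ and $\mu=[\mu_1,\ldots,\mu_n]$ is the partition whose entries are all products $\lambda_i\mu_j$ ($1\le i\le m$, $1\le j\le n$), reordered nonincreasingly; $\lambda^{\times n}$ is the $n$-fold product $\lambda\times\cdots\times\lambda$. $\lambda$ embeds into $\mu$, written $\lambda\hookrightarrow\mu$, if there is a map $\varphi:\{1,\ldots,m\}\to\{1,\ldots,n\}$ with $\sum_{i\in\varphi^{-1}(j)}\lambda_i\le\mu_j$ for all $j$. *)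

theory Defs
  imports Complex_Main
begin

text \<open>An integral partition: a finite nonincreasing list of positive naturals.
  Since entries are sorted, list equality coincides with multiset equality.\<close>
definition is_partition :: "nat list \<Rightarrow> bool" where
  "is_partition xs \<longleftrightarrow> sorted_wrt (\<ge>) xs \<and> (\<forall>x\<in>set xs. 0 < x)"

definition pnorm :: "real \<Rightarrow> nat list \<Rightarrow> real" where
  "pnorm p xs = (\<Sum>x\<leftarrow>xs. real x powr p) powr (1 / p)"

definition ptimes :: "nat list \<Rightarrow> nat list \<Rightarrow> nat list" where
  "ptimes xs ys = rev (sort [x * y. x \<leftarrow> xs, y \<leftarrow> ys])"

fun ppow :: "nat list \<Rightarrow> nat \<Rightarrow> nat list" where
  "ppow xs 0 = [1]"
| "ppow xs (Suc n) = ptimes (ppow xs n) xs"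

definition embeds :: "nat list \<Rightarrow> nat list \<Rightarrow> bool" where
  "embeds xs ys \<longleftrightarrow> (\<exists>\<phi> :: nat \<Rightarrow> nat.
      (\<forall>i < length xs. \<phi> i < length ys) \<and>
      (\<forall>j < length ys. (\<Sum>i | i < length xs \<and> \<phi> i = j. xs ! i) \<le> ys ! j))"

end

theory Submission
  imports Defs "HOL-Library.Multiset"
begin

(* Write S_p(xs) for the sum of the p-th powers of the entries. S_p is multiplicative under the
   product of partitions, so S_p(lam^n) = S_p(mu^n). Since t |-> t^p is strictly superadditive
   for p > 1, an embedding of lam^n into mu^n with equal p-th power sums must send the entries
   bijectively to equal entries, hence lam^n = mu^n as multisets. Then S_k(lam)^n = S_k(mu)^n
   for every natural k, so lam and mu have the same power sums of all orders. These determine a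
   multiset of positive reals: the multiplicity of the largest entry M is the limit of
   S_k / M^k, after which one copy of M is removed from both sides. *)

definition power_sum :: "real \<Rightarrow> nat list \<Rightarrow> real" where
  "power_sum p xs = (\<Sum>x\<leftarrow>xs. real x powr p)"

lemma power_sum_nonneg: "0 \<le> power_sum p xs"
  unfolding power_sum_def by (intro sum_list_nonneg) auto

lemma power_sum_eq_pnorm_powr: "p \<noteq> 0 \<Longrightarrow> power_sum p xs = pnorm p xs powr p"
  unfolding pnorm_def power_sum_def[symmetric] using power_sum_nonneg by (simp add: powr_powr)

lemma power_sum_mset_cong: "mset xs = mset ys \<Longrightarrow> power_sum p xs = power_sum p ys"
  unfolding power_sum_def by (metis mset_map sum_mset_sum_list)

lemma power_sum_ptimes: "power_sum p (ptimes xs ys) = power_sum p xs * power_sum p ys"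
proof -
  have "power_sum p (ptimes xs ys) = power_sum p [x * y. x \<leftarrow> xs, y \<leftarrow> ys]"
    unfolding ptimes_def by (rule power_sum_mset_cong) simp
  also have "\<dots> = power_sum p xs * power_sum p ys"
    by (induction xs)
      (simp_all add: power_sum_def comp_def powr_mult sum_list_const_mult distrib_right)
  finally show ?thesis .
qed

lemma power_sum_ppow: "power_sum p (ppow xs n) = power_sum p xs ^ n"
  by (induction n) (simp add: power_sum_def, simp add: power_sum_ptimes)

lemma power_sum_eq_sum_nth: "power_sum p xs = (\<Sum>i<length xs. real (xs ! i) powr p)"
  unfolding power_sum_def by (simp add: sum_list_sum_nth atLeast0LessThan)

(* Positivity matters here: 0 powr 0 = 0, whereas 0 ^ 0 = 1. *)
lemma power_sum_of_nat:
  assumes "\<forall>x\<in>set xs. 0 < x"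
  shows "power_sum (real k) xs = (\<Sum>x\<in>#image_mset real (mset xs). x ^ k)"
proof -
  have "power_sum (real k) xs = (\<Sum>x\<leftarrow>xs. real x ^ k)"
    unfolding power_sum_def using assms
    by (intro arg_cong[of _ _ sum_list] map_cong) (simp_all add: powr_realpow)
  then show ?thesis by (simp flip: sum_mset_sum_list add: image_mset.compositionality comp_def)
qed

lemma ppow_pos: "\<forall>x\<in>set xs. 0 < x \<Longrightarrow> \<forall>x\<in>set (ppow xs n). 0 < x"
  by (induction n) (auto simp: ptimes_def)

lemma powr_le_mult_powr:
  fixes x y p :: real
  assumes "0 \<le> x" "x \<le> y" "1 \<le> p"
  shows "x powr p \<le> x * y powr (p - 1)"
proof -
  have "x powr p = x * x powr (p - 1)" using assms(1) powr_mult_base[of x "p - 1"] by simp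
  also have "\<dots> \<le> x * y powr (p - 1)" using assms by (intro mult_left_mono powr_mono2) auto
  finally show ?thesis .
qed

lemma powr_less_mult_powr:
  fixes x y p :: real
  assumes "0 < x" "x < y" "1 < p"
  shows "x powr p < x * y powr (p - 1)"
proof -
  have "x powr p = x * x powr (p - 1)" using assms(1) powr_mult_base[of x "p - 1"] by simp
  also have "\<dots> < x * y powr (p - 1)"
    using assms by (intro mult_strict_left_mono powr_less_mono2) auto
  finally show ?thesis .
qed

lemma sum_mult_powr_sum:
  fixes f :: "'a \<Rightarrow> real"
  assumes "\<forall>i\<in>I. 0 \<le> f i"
  shows "(\<Sum>i\<in>I. f i * sum f I powr (p - 1)) = sum f I powr p"
  using assms powr_mult_base[of "sum f I" "p - 1"] by (simp add: sum_nonneg flip: sum_distrib_right)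

lemma sum_powr_le_powr_sum:
  fixes f :: "'a \<Rightarrow> real"
  assumes "finite I" "\<forall>i\<in>I. 0 \<le> f i" "1 \<le> p"
  shows "(\<Sum>i\<in>I. f i powr p) \<le> sum f I powr p"
proof -
  have "f i powr p \<le> f i * sum f I powr (p - 1)" if "i \<in> I" for i
    using assms that by (intro powr_le_mult_powr member_le_sum) auto
  then have "(\<Sum>i\<in>I. f i powr p) \<le> (\<Sum>i\<in>I. f i * sum f I powr (p - 1))"
    by (rule sum_mono)
  then show ?thesis using assms(2) by (simp add: sum_mult_powr_sum)
qed

lemma sum_powr_less_powr_sum:
  fixes f :: "'a \<Rightarrow> real"
  assumes "finite I" "\<forall>i\<in>I. 0 < f i" "1 < p" "i \<in> I" "j \<in> I" "i \<noteq> j"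
  shows "(\<Sum>i\<in>I. f i powr p) < sum f I powr p"
proof -
  have le: "f k powr p \<le> f k * sum f I powr (p - 1)" if "k \<in> I" for k
    using assms that by (intro powr_le_mult_powr member_le_sum) (auto simp: less_imp_le)
  have "f i + f j \<le> sum f I"
    using assms sum_mono2[of I "{i, j}" f] by (auto simp: less_imp_le)
  then have "f i powr p < f i * sum f I powr (p - 1)"
    using assms(2-5) by (intro powr_less_mult_powr) auto
  then have "(\<Sum>i\<in>I. f i powr p) < (\<Sum>i\<in>I. f i * sum f I powr (p - 1))"
    using le assms(1,4) by (intro sum_strict_mono_ex1) auto
  then show ?thesis using assms(2) by (simp add: sum_mult_powr_sum less_imp_le)
qed

lemma sum_powr_eq_powr_imp_singleton:
  fixes f :: "'a \<Rightarrow> real"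
  assumes "finite I" "\<forall>i\<in>I. 0 < f i" "sum f I \<le> y" "0 < y" "1 < p"
    and eq: "(\<Sum>i\<in>I. f i powr p) = y powr p"
  shows "\<exists>i. I = {i} \<and> f i = y"
proof -
  have "I \<noteq> {}" using eq \<open>0 < y\<close> by auto
  then obtain i where "i \<in> I" by blast
  have "I = {i}"
  proof (rule ccontr)
    assume "I \<noteq> {i}"
    with \<open>i \<in> I\<close> obtain j where "j \<in> I" "j \<noteq> i" by blast
    then have "(\<Sum>i\<in>I. f i powr p) < sum f I powr p"
      using assms(1,2,5) \<open>i \<in> I\<close> by (intro sum_powr_less_powr_sum) auto
    also have "\<dots> \<le> y powr p"
      using assms(2,3,5) sum_nonneg[of I f] by (intro powr_mono2) (auto simp: less_imp_le)
    finally show False using eq by simp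
  qed
  moreover have "f i = y"
  proof (rule ccontr)
    assume "f i \<noteq> y"
    then have "f i < y" using assms(3) \<open>I = {i}\<close> by simp
    then have "f i powr p < y powr p"
      using assms(2,5) \<open>i \<in> I\<close> by (intro powr_less_mono2) (auto simp: less_imp_le)
    then show False using eq \<open>I = {i}\<close> by simp
  qed
  ultimately show ?thesis by blast
qed

lemma mset_eq_if_fibers_singleton:
  assumes "\<forall>i<length xs. \<phi> i < length ys"
    and "\<forall>j<length ys. \<exists>i. {i. i < length xs \<and> \<phi> i = j} = {i} \<and> xs ! i = ys ! j"
  shows "mset xs = mset ys"
proof -
  have fiber: "{i'. i' < length xs \<and> \<phi> i' = \<phi> i} = {i}" and nth: "xs ! i = ys ! \<phi> i"
    if i: "i < length xs" for i
  proof -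
    have "\<phi> i < length ys" using assms(1) i by blast
    with assms(2) obtain i0
      where i0: "{i'. i' < length xs \<and> \<phi> i' = \<phi> i} = {i0}" "xs ! i0 = ys ! \<phi> i"
      by blast
    moreover have "i \<in> {i'. i' < length xs \<and> \<phi> i' = \<phi> i}" using i by simp
    ultimately have "i = i0" by simp
    with i0 show "{i'. i' < length xs \<and> \<phi> i' = \<phi> i} = {i}" "xs ! i = ys ! \<phi> i" by simp_all
  qed
  have inj: "inj_on \<phi> {..<length xs}"
  proof (rule inj_onI)
    fix i i' assume "i \<in> {..<length xs}" "i' \<in> {..<length xs}" "\<phi> i = \<phi> i'"
    then have "i' \<in> {i''. i'' < length xs \<and> \<phi> i'' = \<phi> i}" by simp
    also have "\<dots> = {i}" using \<open>i \<in> {..<length xs}\<close> by (intro fiber) simp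
    finally show "i = i'" by simp
  qed
  have img: "\<phi> ` {..<length xs} = {..<length ys}"
  proof
    show "\<phi> ` {..<length xs} \<subseteq> {..<length ys}" using assms(1) by auto
    show "{..<length ys} \<subseteq> \<phi> ` {..<length xs}"
    proof
      fix j assume "j \<in> {..<length ys}"
      with assms(2) obtain i where "{i'. i' < length xs \<and> \<phi> i' = j} = {i}" by auto
      then have "i \<in> {i'. i' < length xs \<and> \<phi> i' = j}" by simp
      then show "j \<in> \<phi> ` {..<length xs}" by auto
    qed
  qed
  have mset_nth: "mset zs = image_mset (nth zs) (mset_set {..<length zs})" for zs :: "'a list"
    by (metis atLeast0LessThan map_nth mset_map mset_upt)
  have "mset xs = image_mset (\<lambda>i. ys ! \<phi> i) (mset_set {..<length xs})"
    unfolding mset_nth[of xs] using nth by (intro image_mset_cong) auto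
  also have "\<dots> = image_mset (nth ys) (image_mset \<phi> (mset_set {..<length xs}))"
    by (simp add: image_mset.compositionality comp_def)
  also have "\<dots> = mset ys"
    unfolding image_mset_mset_set[OF inj] img mset_nth[of ys] ..
  finally show ?thesis .
qed

lemma mset_eq_if_embeds_power_sum_eq:
  assumes "embeds xs ys" "\<forall>x\<in>set xs. 0 < x" "\<forall>y\<in>set ys. 0 < y" "1 < p"
    and "power_sum p xs = power_sum p ys"
  shows "mset xs = mset ys"
proof -
  obtain \<phi> where \<phi>: "\<forall>i<length xs. \<phi> i < length ys"
    and fiber_le: "\<forall>j<length ys. (\<Sum>i | i < length xs \<and> \<phi> i = j. xs ! i) \<le> ys ! j"
    using assms(1) unfolding embeds_def by blast
  define F where "F j = {i. i < length xs \<and> \<phi> i = j}" for j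
  define a where "a j = (\<Sum>i\<in>F j. real (xs ! i) powr p)" for j
  have pos: "\<forall>i\<in>F j. 0 < real (xs ! i)" for j
    using assms(2) unfolding F_def by auto
  have fiber_sum_le: "(\<Sum>i\<in>F j. real (xs ! i)) \<le> real (ys ! j)" if "j < length ys" for j
    using fiber_le that unfolding F_def by (metis of_nat_le_iff of_nat_sum)
  have a_le: "a j \<le> real (ys ! j) powr p" if "j < length ys" for j
  proof -
    have "a j \<le> (\<Sum>i\<in>F j. real (xs ! i)) powr p"
      unfolding a_def using pos assms(4)
      by (intro sum_powr_le_powr_sum) (auto simp: F_def less_imp_le)
    also have "\<dots> \<le> real (ys ! j) powr p"
      using fiber_sum_le[OF that] pos assms(4)
      by (intro powr_mono2 sum_nonneg) (auto simp: less_imp_le)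
    finally show ?thesis .
  qed
  have "(\<Sum>j<length ys. a j) = power_sum p xs"
    unfolding a_def F_def power_sum_eq_sum_nth
    using sum.group[of "{..<length xs}" "{..<length ys}" \<phi> "\<lambda>i. real (xs ! i) powr p"] \<phi>
    by auto
  also have "\<dots> = (\<Sum>j<length ys. real (ys ! j) powr p)"
    using assms(5) by (simp add: power_sum_eq_sum_nth)
  finally have sums_eq: "(\<Sum>j<length ys. a j) = (\<Sum>j<length ys. real (ys ! j) powr p)" .
  have a_eq: "a j = real (ys ! j) powr p" if "j < length ys" for j
    using a_le that by (intro sum_mono_inv[OF sums_eq]) auto
  have "\<exists>i. F j = {i} \<and> real (xs ! i) = real (ys ! j)" if "j < length ys" for j
    using sum_powr_eq_powr_imp_singleton[OF _ pos fiber_sum_le[OF that] _ assms(4)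
        a_eq[OF that, unfolded a_def]] assms(3) that
    by (simp add: F_def)
  then show ?thesis
    using \<phi> by (intro mset_eq_if_fibers_singleton) (auto simp: F_def)
qed

lemma tendsto_sum_mset_power_div:
  fixes A :: "real multiset"
  assumes "0 < M" and "\<forall>x\<in>#A. 0 \<le> x \<and> x \<le> M"
  shows "(\<lambda>k. \<Sum>x\<in>#A. (x / M) ^ k) \<longlonglongrightarrow> real (count A M)"
  using assms(2)
proof (induction A)
  case empty
  then show ?case by simp
next
  case (add a A)
  have "(\<lambda>k. (a / M) ^ k) \<longlonglongrightarrow> (if a = M then 1 else 0)"
  proof (cases "a = M")
    case True
    then show ?thesis using assms(1) by simp
  next
    case False
    with add.prems assms(1) have "\<bar>a / M\<bar> < 1" by auto
    then show ?thesis using False by (simp add: LIMSEQ_power_zero)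
  qed
  with add show ?case by (auto intro: tendsto_add[THEN tendsto_eq_rhs])
qed

lemma count_eq_if_power_sums_eq:
  fixes A B :: "real multiset"
  assumes "0 < M" and "\<forall>x\<in>#A + B. 0 \<le> x \<and> x \<le> M"
    and "\<forall>k::nat. (\<Sum>x\<in>#A. x ^ k) = (\<Sum>x\<in>#B. x ^ k)"
  shows "count A M = count B M"
proof -
  have "(\<Sum>x\<in>#C. (x / M) ^ k) = (\<Sum>x\<in>#C. x ^ k) / M ^ k" for C :: "real multiset" and k
    by (induction C) (simp_all add: add_divide_distrib power_divide)
  then have "(\<lambda>k. \<Sum>x\<in>#A. (x / M) ^ k) = (\<lambda>k. \<Sum>x\<in>#B. (x / M) ^ k)"
    using assms(3) by simp
  moreover have "(\<lambda>k. \<Sum>x\<in>#A. (x / M) ^ k) \<longlonglongrightarrow> real (count A M)"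
    and "(\<lambda>k. \<Sum>x\<in>#B. (x / M) ^ k) \<longlonglongrightarrow> real (count B M)"
    using assms(1,2) by (auto intro: tendsto_sum_mset_power_div)
  ultimately show ?thesis by (metis LIMSEQ_unique of_nat_eq_iff)
qed

lemma multiset_eq_if_power_sums_eq:
  fixes A B :: "real multiset"
  assumes "\<forall>x\<in>#A. 0 < x" and "\<forall>x\<in>#B. 0 < x"
    and "\<forall>k::nat. (\<Sum>x\<in>#A. x ^ k) = (\<Sum>x\<in>#B. x ^ k)"
  shows "A = B"
  using assms
proof (induction A arbitrary: B rule: full_multiset_induct)
  case (less A)
  show ?case
  proof (cases "A + B = {#}")
    case True
    then show ?thesis by simp
  next
    case False
    define M where "M = Max (set_mset (A + B))"
    have "M \<in># A + B"
      unfolding M_def using False by (intro Max_in) auto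
    then have "0 < M" using less.prems(1,2) by auto
    have "\<forall>x\<in>#A + B. 0 \<le> x \<and> x \<le> M"
      unfolding M_def using less.prems(1,2) by (auto intro: Max_ge less_imp_le)
    then have "count A M = count B M"
      using count_eq_if_power_sums_eq \<open>0 < M\<close> less.prems(3) by blast
    with \<open>M \<in># A + B\<close> have "M \<in># A" "M \<in># B"
      by (auto simp flip: count_greater_zero_iff)
    have "\<forall>k::nat. (\<Sum>x\<in>#A - {#M#}. x ^ k) = (\<Sum>x\<in>#B - {#M#}. x ^ k)"
      using less.prems(3) insert_DiffM[OF \<open>M \<in># A\<close>] insert_DiffM[OF \<open>M \<in># B\<close>]
      by (metis add_left_cancel sum_mset.insert image_mset_add_mset)
    then have "A - {#M#} = B - {#M#}"
      using less.IH mset_subset_diff_self[OF \<open>M \<in># A\<close>] less.prems(1,2) by (meson in_diffD)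
    then show ?thesis using \<open>M \<in># A\<close> \<open>M \<in># B\<close> by (metis insert_DiffM)
  qed
qed

lemma mset_eq_if_mset_ppow_eq:
  assumes "\<forall>x\<in>set xs. 0 < x" "\<forall>y\<in>set ys. 0 < y" "0 < n"
    and "mset (ppow xs n) = mset (ppow ys n)"
  shows "mset xs = mset ys"
proof -
  have "power_sum k xs = power_sum k ys" for k
  proof -
    have "power_sum k xs ^ n = power_sum k ys ^ n"
      using power_sum_mset_cong[OF assms(4)] by (simp add: power_sum_ppow)
    then show ?thesis using assms(3) power_sum_nonneg by (metis power_eq_imp_eq_base)
  qed
  then have "image_mset real (mset xs) = image_mset real (mset ys)"
    using assms(1,2) by (intro multiset_eq_if_power_sums_eq) (auto simp flip: power_sum_of_nat)
  then show ?thesis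
    using multiset.inj_map[OF inj_of_nat] by (auto dest: injD)
qed

lemma partition_eq_if_mset_eq:
  assumes "is_partition xs" "is_partition ys" "mset xs = mset ys"
  shows "xs = ys"
proof -
  have "sorted (rev xs)" "sorted (rev ys)"
    using assms(1,2) unfolding is_partition_def by (simp_all add: sorted_wrt_rev)
  then have "sort (rev ys) = rev xs" "sort (rev ys) = rev ys"
    using assms(3) by (simp_all add: properties_for_sort)
  then show ?thesis by simp
qed

theorem corollary2p2:
  fixes lam mu :: "nat list" and p :: real
  assumes "is_partition lam" and "is_partition mu" and "lam \<noteq> mu"
    and "1 < p" and "pnorm p lam = pnorm p mu"
  shows "\<forall>n::nat. 0 < n \<longrightarrow> \<not> embeds (ppow lam n) (ppow mu n)"
proof (intro allI impI notI)
  fix n :: nat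
  assume "0 < n" and "embeds (ppow lam n) (ppow mu n)"
  have pos: "\<forall>x\<in>set lam. 0 < x" "\<forall>x\<in>set mu. 0 < x"
    using assms(1,2) unfolding is_partition_def by auto
  have "power_sum p lam = power_sum p mu"
    using assms(4,5) by (simp add: power_sum_eq_pnorm_powr)
  then have "power_sum p (ppow lam n) = power_sum p (ppow mu n)"
    by (simp add: power_sum_ppow)
  then have "mset (ppow lam n) = mset (ppow mu n)"
    using \<open>embeds (ppow lam n) (ppow mu n)\<close> pos assms(4)
    by (intro mset_eq_if_embeds_power_sum_eq ppow_pos)
  then have "mset lam = mset mu"
    by (rule mset_eq_if_mset_ppow_eq[OF pos \<open>0 < n\<close>])
  then show False
    using assms(1-3) partition_eq_if_mset_eq by blast
qed

end
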